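(* Let $G$ be a simple graph and let $G'$ be obtained from $G$ by a symmetric $\mathcal K_{xy}$-operation. Then $c_s(G)\ge c_s(G')$ for every $s\in\{0,1,\dots,v(G)-1\}$.
   Context: All graphs are finite, undirected, without loops. For a graph $G$ on $n$ vertices let $L(G)=D(G)-A(G)$ be its Laplacian matrix. Write $\det(\lambda I-L(G))=\lambda P(\lambda,G)$ with $P(\lambda,G)=\sum_{s=0}^{n-1}(-1)^s c_s(G)\lambda^{n-1-s}$ (the Laplacian polynomial); equivalently $c_s(G)=\sum_F\gamma(F)$, the sum over spanning forests $F$ of $G$ with $s$ edges, where $\gamma(F)$ is the product of the numbers of vertices of the components of $F$. $\mathcal K_{xy}$-operation: let $G$ be a simple graph, $x\ne y$ vertices, $\mathcal K$ an induced subgraph of $G$ containing $x$ and $y$, and $N(v)$ the neighbourhood of $v$. Put $X=N(x)\setminus(V(\mathcal K)\cup N(y))$, $Y=N(y)\setminus(V(\mathcal K)\cup N(x))$, $[x,X]=\{xv:v\in X\}$, $[y,X]=\{yv:v\in X\}$, $[y,Y]=\{yv:v\in Y\}$. The graph $\mathcal K_{xy}(G)=(G-[x,X])\cup[y,X]$ (on the same vertex set) is obtained from $G$ by the $\mathcal K_{xy}$-operation. The operation is called symmetric if the graph $G-([x,X]\cup[y,Y])$ has an automorphism $\alpha$ with $\alpha(x)=y$, $\alpha(y)=x$, $\alpha(V(\mathcal K))=V(\mathcal K)$, and $\alpha(v)=v$ for every $v\in X\cup Y$. *)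

theory Defs
  imports Main
begin

definition simple_graph :: "'a set \<Rightarrow> 'a set set \<Rightarrow> bool" where
  "simple_graph V E \<longleftrightarrow> finite V \<and> (\<forall>e\<in>E. \<exists>u v. e = {u, v} \<and> u \<noteq> v \<and> u \<in> V \<and> v \<in> V)"

definition nbhd :: "'a set set \<Rightarrow> 'a \<Rightarrow> 'a set" where
  "nbhd E v = {u. {u, v} \<in> E}"

definition adj_rel :: "'a set set \<Rightarrow> ('a \<times> 'a) set" where
  "adj_rel F = {(u, v). {u, v} \<in> F}"

definition connected_in :: "'a set set \<Rightarrow> 'a \<Rightarrow> 'a \<Rightarrow> bool" where
  "connected_in F u v \<longleftrightarrow> (u, v) \<in> (adj_rel F)\<^sup>*"

definition acyclic_edges :: "'a set set \<Rightarrow> bool" where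
  "acyclic_edges F \<longleftrightarrow> (\<forall>u v. {u, v} \<in> F \<longrightarrow> \<not> connected_in (F - {{u, v}}) u v)"

text \<open>Spanning forest of (V,E) with s edges (spanning: vertex set is V).\<close>
definition spanning_forests :: "'a set set \<Rightarrow> nat \<Rightarrow> 'a set set set" where
  "spanning_forests E s = {F. F \<subseteq> E \<and> acyclic_edges F \<and> card F = s}"

definition components :: "'a set \<Rightarrow> 'a set set \<Rightarrow> 'a set set" where
  "components V F = (\<lambda>v. {w \<in> V. connected_in F v w}) ` V"

definition gamma :: "'a set \<Rightarrow> 'a set set \<Rightarrow> nat" where
  "gamma V F = (\<Prod>C\<in>components V F. card C)"

definition lap_coeff :: "'a set \<Rightarrow> 'a set set \<Rightarrow> nat \<Rightarrow> nat" where
  "lap_coeff V E s = (\<Sum>F\<in>spanning_forests E s. gamma V F)"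

definition Xset :: "'a set set \<Rightarrow> 'a set \<Rightarrow> 'a \<Rightarrow> 'a \<Rightarrow> 'a set" where
  "Xset E K x y = nbhd E x - (K \<union> nbhd E y)"

definition star_edges :: "'a \<Rightarrow> 'a set \<Rightarrow> 'a set set" where
  "star_edges x X = {{x, v} | v. v \<in> X}"

text \<open>The K_xy-operation (K given by its vertex set; the induced subgraph is determined by it).\<close>
definition Kxy_op :: "'a set set \<Rightarrow> 'a set \<Rightarrow> 'a \<Rightarrow> 'a \<Rightarrow> 'a set set" where
  "Kxy_op E K x y = (E - star_edges x (Xset E K x y)) \<union> star_edges y (Xset E K x y)"

definition graph_automorphism :: "'a set \<Rightarrow> 'a set set \<Rightarrow> ('a \<Rightarrow> 'a) \<Rightarrow> bool" where
  "graph_automorphism V E \<alpha> \<longleftrightarrow> bij_betw \<alpha> V V \<and>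
     (\<forall>u\<in>V. \<forall>v\<in>V. {u, v} \<in> E \<longleftrightarrow> {\<alpha> u, \<alpha> v} \<in> E)"

definition symmetric_Kxy :: "'a set \<Rightarrow> 'a set set \<Rightarrow> 'a set \<Rightarrow> 'a \<Rightarrow> 'a \<Rightarrow> bool" where
  "symmetric_Kxy V E K x y \<longleftrightarrow>
     (\<exists>\<alpha>. graph_automorphism V (E - (star_edges x (Xset E K x y) \<union> star_edges y (Xset E K y x))) \<alpha>
        \<and> \<alpha> x = y \<and> \<alpha> y = x \<and> \<alpha> ` K = K
        \<and> (\<forall>v \<in> Xset E K x y \<union> Xset E K y x. \<alpha> v = v))"

end

(*
  Let X, Y be as in the operation and H = E - ([x,X] + [y,Y]), so that E = H + [x,X] + [y,Y]
  and E' = H + [y,X] + [y,Y]. An s-edge forest in E (in E') is a set T of edges of H together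
  with a set U of leaves in X + Y, hung on x if in X and on y if in Y (all on y in E').
  The automorphism alpha of H swaps x and y and fixes X + Y; pairing (T, U) with (alpha T, U),
  it suffices to show, for fixed T and U1 = U Int X, U2 = U Int Y, that the forest weights of
    T + [x,U1] + [y,U2]  and  T + [x,U2] + [y,U1]
  sum to at least those of
    T + [y,U1 + U2]  and  T + [x,U1 + U2].
  If T already joins x to y or a centre to a leaf, or two leaves to each other, the terms
  vanish or coincide. Otherwise gamma is multiplicative in the tree sizes, and the difference
  is proportional to s1 s2, the total sizes of the trees of T at U1 and at U2.
*)
theory Submission
  imports Defs
begin

lemma connected_in_refl [simp]: "connected_in F u u"
  by (simp add: connected_in_def)

lemma sym_adj_rel: "sym (adj_rel F)"
  by (auto simp: sym_def adj_rel_def insert_commute)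

lemma connected_in_sym: "connected_in F u v \<Longrightarrow> connected_in F v u"
  unfolding connected_in_def by (rule symD[OF sym_rtrancl[OF sym_adj_rel]])

lemma connected_in_trans: "connected_in F u v \<Longrightarrow> connected_in F v w \<Longrightarrow> connected_in F u w"
  unfolding connected_in_def by (rule rtrancl_trans)

lemma connected_in_edge: "{u, v} \<in> F \<Longrightarrow> connected_in F u v"
  unfolding connected_in_def adj_rel_def by (rule r_into_rtrancl) simp

lemma connected_in_mono:
  assumes "F \<subseteq> F'" "connected_in F u v"
  shows "connected_in F' u v"
proof -
  have "adj_rel F \<subseteq> adj_rel F'" using assms(1) by (auto simp: adj_rel_def)
  then show ?thesis using assms(2) unfolding connected_in_def by (rule subsetD[OF rtrancl_mono])
qed

lemma adj_rel_insert: "adj_rel (insert {a, b} F) = insert (b, a) (insert (a, b) (adj_rel F))"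
  by (auto simp: adj_rel_def doubleton_eq_iff)

lemma connected_in_insert:
  "connected_in (insert {a, b} F) u v \<longleftrightarrow> connected_in F u v
     \<or> (connected_in F u a \<and> connected_in F b v) \<or> (connected_in F u b \<and> connected_in F a v)"
proof
  assume "connected_in (insert {a, b} F) u v"
  then have "connected_in F u v \<or> (connected_in F u a \<and> connected_in F b v)
      \<or> ((connected_in F u b \<or> connected_in F u a) \<and> (connected_in F a v \<or> connected_in F b v))"
    unfolding connected_in_def adj_rel_insert by (simp add: rtrancl_insert)
  then show "connected_in F u v \<or> (connected_in F u a \<and> connected_in F b v)
      \<or> (connected_in F u b \<and> connected_in F a v)"
    using connected_in_trans by metis
next
  have ab: "connected_in (insert {a, b} F) a b" "connected_in (insert {a, b} F) b a"
    by (auto intro: connected_in_edge simp: insert_commute)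
  have "connected_in F p q \<Longrightarrow> connected_in (insert {a, b} F) p q" for p q
    by (rule connected_in_mono[of F]) auto
  moreover assume "connected_in F u v \<or> (connected_in F u a \<and> connected_in F b v)
      \<or> (connected_in F u b \<and> connected_in F a v)"
  ultimately show "connected_in (insert {a, b} F) u v"
    using ab connected_in_trans by metis
qed

lemma acyclic_edges_subset:
  assumes "F \<subseteq> F'" "acyclic_edges F'"
  shows "acyclic_edges F"
  unfolding acyclic_edges_def
proof (intro allI impI notI)
  fix u v assume uv: "{u, v} \<in> F" and c: "connected_in (F - {{u, v}}) u v"
  have "connected_in (F' - {{u, v}}) u v" by (rule connected_in_mono[OF _ c]) (use assms(1) in blast)
  then show False using assms uv unfolding acyclic_edges_def by blast
qed

lemma not_acyclic_edges_if_connected: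
  assumes "{a, b} \<in> F'" "F \<subseteq> F' - {{a, b}}" "connected_in F a b"
  shows "\<not> acyclic_edges F'"
  using assms connected_in_mono[OF assms(2,3)] unfolding acyclic_edges_def by metis

lemma acyclic_edges_insert:
  assumes "a \<noteq> b" "{a, b} \<notin> F"
  shows "acyclic_edges (insert {a, b} F) \<longleftrightarrow> acyclic_edges F \<and> \<not> connected_in F a b"
proof
  assume A: "acyclic_edges (insert {a, b} F)"
  have "acyclic_edges F" by (rule acyclic_edges_subset[OF _ A]) auto
  moreover have "insert {a, b} F - {{a, b}} = F" using assms by auto
  then have "\<not> connected_in F a b" using A unfolding acyclic_edges_def by (metis insertI1)
  ultimately show "acyclic_edges F \<and> \<not> connected_in F a b" by blast
next
  assume A: "acyclic_edges F \<and> \<not> connected_in F a b"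
  show "acyclic_edges (insert {a, b} F)"
    unfolding acyclic_edges_def
  proof (intro allI impI)
    fix u v assume uv: "{u, v} \<in> insert {a, b} F"
    show "\<not> connected_in (insert {a, b} F - {{u, v}}) u v"
    proof (cases "{u, v} = {a, b}")
      case True
      then have "insert {a, b} F - {{u, v}} = F" using assms by auto
      moreover have "(u = a \<and> v = b) \<or> (u = b \<and> v = a)" using True by (simp add: doubleton_eq_iff)
      ultimately show ?thesis using A by (metis connected_in_sym)
    next
      case False
      define F0 where "F0 = F - {{u, v}}"
      have uvF: "{u, v} \<in> F" using uv False by auto
      have eq: "insert {a, b} F - {{u, v}} = insert {a, b} F0" using False by (auto simp: F0_def)
      have nc: "\<not> connected_in F0 u v" using A uvF unfolding acyclic_edges_def F0_def by blast
      have "connected_in F u v" using uvF by (rule connected_in_edge)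
      moreover have "connected_in F0 p q \<Longrightarrow> connected_in F p q" for p q
        by (erule connected_in_mono[rotated]) (auto simp: F0_def)
      ultimately have "\<not> (connected_in F0 u a \<and> connected_in F0 b v)"
          "\<not> (connected_in F0 u b \<and> connected_in F0 a v)"
        using A by (metis connected_in_sym connected_in_trans)+
      then show ?thesis unfolding eq connected_in_insert using nc by blast
    qed
  qed
qed

definition component_of :: "'a set \<Rightarrow> 'a set set \<Rightarrow> 'a \<Rightarrow> 'a set" where
  "component_of V F v = {w \<in> V. connected_in F v w}"

lemma gamma_eq_prod_component_of: "gamma V F = (\<Prod>C\<in>component_of V F ` V. card C)"
  by (simp add: gamma_def components_def component_of_def)

lemma component_of_eq: "connected_in F v a \<Longrightarrow> component_of V F v = component_of V F a"
  unfolding component_of_def by (metis connected_in_sym connected_in_trans)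

lemma component_of_self: "a \<in> V \<Longrightarrow> a \<in> component_of V F a"
  by (simp add: component_of_def)

lemma connected_in_if_mem_component_of: "w \<in> component_of V F v \<Longrightarrow> connected_in F v w"
  by (simp add: component_of_def)

lemma card_component_of_pos: "finite V \<Longrightarrow> v \<in> V \<Longrightarrow> card (component_of V F v) > 0"
  unfolding component_of_def by (subst card_gt_0_iff) auto

lemma component_of_insert:
  assumes "\<not> connected_in F a b"
  shows "component_of V (insert {a, b} F) v =
     (if connected_in F v a \<or> connected_in F v b
      then component_of V F a \<union> component_of V F b else component_of V F v)"
proof -
  have "\<not> (connected_in F v a \<and> connected_in F v b)"
    using assms by (metis connected_in_sym connected_in_trans)
  then show ?thesis
    unfolding component_of_def connected_in_insert
    by (auto dest: connected_in_sym connected_in_trans)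
qed

lemma card_component_of_insert:
  assumes "finite V" "\<not> connected_in F a b"
  shows "card (component_of V (insert {a, b} F) a) = card (component_of V F a) + card (component_of V F b)"
proof -
  have "component_of V F a \<inter> component_of V F b = {}"
    using assms(2) unfolding component_of_def by (auto dest: connected_in_sym connected_in_trans)
  moreover have "finite (component_of V F a)" "finite (component_of V F b)"
    using assms(1) by (auto simp: component_of_def)
  ultimately show ?thesis
    using component_of_insert[OF assms(2), of V a] by (simp add: card_Un_disjoint)
qed

lemma gamma_insert:
  assumes fin: "finite V" and aV: "a \<in> V" and bV: "b \<in> V" and nc: "\<not> connected_in F a b"
  shows "gamma V (insert {a, b} F) * card (component_of V F a) * card (component_of V F b)
       = gamma V F * (card (component_of V F a) + card (component_of V F b))"
proof -
  define Ca where "Ca = component_of V F a"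
  define Cb where "Cb = component_of V F b"
  define R where "R = component_of V F ` V - {Ca, Cb}"
  have touches_ab: "connected_in F v a \<or> connected_in F v b \<longleftrightarrow> component_of V F v \<in> {Ca, Cb}" if "v \<in> V" for v
    using aV bV component_of_eq component_of_self connected_in_if_mem_component_of connected_in_sym
    unfolding Ca_def Cb_def by (smt (verit) insert_iff singleton_iff)
  have new: "component_of V (insert {a, b} F) ` V = insert (Ca \<union> Cb) R"
  proof (intro equalityI subsetI)
    fix C assume "C \<in> component_of V (insert {a, b} F) ` V"
    then obtain v where "v \<in> V" "C = component_of V (insert {a, b} F) v" by auto
    then show "C \<in> insert (Ca \<union> Cb) R"
      using touches_ab component_of_insert[OF nc, of V v] unfolding R_def Ca_def Cb_def by auto
  next
    fix C assume C: "C \<in> insert (Ca \<union> Cb) R"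
    show "C \<in> component_of V (insert {a, b} F) ` V"
    proof (cases "C = Ca \<union> Cb")
      case True
      then show ?thesis using aV component_of_insert[OF nc, of V a] by (auto simp: Ca_def Cb_def)
    next
      case False
      then obtain v where "v \<in> V" "C = component_of V F v" "C \<notin> {Ca, Cb}" using C unfolding R_def by auto
      then show ?thesis using touches_ab component_of_insert[OF nc, of V v] by (metis image_eqI)
    qed
  qed
  have "Ca \<noteq> Cb"
    using nc component_of_self[OF bV, of F] connected_in_if_mem_component_of unfolding Ca_def Cb_def by metis
  moreover have "Ca \<in> component_of V F ` V" "Cb \<in> component_of V F ` V"
    using aV bV by (auto simp: Ca_def Cb_def)
  ultimately have old: "gamma V F = card Ca * card Cb * (\<Prod>C\<in>R. card C)"
    unfolding gamma_eq_prod_component_of using fin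
    by (simp add: R_def prod.remove[of _ Ca] prod.remove[of _ Cb] insert_Diff_if Diff_insert2[symmetric])
  have "Ca \<union> Cb \<notin> R"
  proof
    assume "Ca \<union> Cb \<in> R"
    then obtain v where v: "v \<in> V" "component_of V F v = Ca \<union> Cb" "component_of V F v \<notin> {Ca, Cb}"
      unfolding R_def by auto
    then show False using touches_ab component_of_self[OF aV, of F] connected_in_if_mem_component_of
      unfolding Ca_def by (metis UnI1 connected_in_sym)
  qed
  then have "gamma V (insert {a, b} F) = card (Ca \<union> Cb) * (\<Prod>C\<in>R. card C)"
    unfolding gamma_eq_prod_component_of new using fin by (simp add: R_def)
  moreover have "card (Ca \<union> Cb) = card Ca + card Cb"
    using card_component_of_insert[OF fin nc] component_of_insert[OF nc, of V a] by (simp add: Ca_def Cb_def)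
  ultimately show ?thesis using old by (simp add: Ca_def Cb_def algebra_simps)
qed

lemma star_edges_empty [simp]: "star_edges z {} = {}"
  by (simp add: star_edges_def)

lemma star_edges_insert: "star_edges z (insert c S) = insert {z, c} (star_edges z S)"
  by (auto simp: star_edges_def)

lemma star_edges_Un: "star_edges z (A \<union> B) = star_edges z A \<union> star_edges z B"
  by (auto simp: star_edges_def)

lemma star_edges_mono: "A \<subseteq> B \<Longrightarrow> star_edges z A \<subseteq> star_edges z B"
  by (auto simp: star_edges_def)

lemma mem_star_edges: "e \<in> star_edges z S \<longleftrightarrow> (\<exists>v\<in>S. e = {z, v})"
  by (auto simp: star_edges_def)

lemma doubleton_mem_star_edges [simp]: "{z, a} \<in> star_edges z S \<longleftrightarrow> a \<in> S"
  by (auto simp: star_edges_def doubleton_eq_iff)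

lemma finite_star_edges [simp]: "finite S \<Longrightarrow> finite (star_edges z S)"
  by (simp add: star_edges_def)

lemma card_star_edges: "finite S \<Longrightarrow> card (star_edges z S) = card S"
  by (induction S rule: finite_induct) (simp_all add: star_edges_insert)

definition star_attachable :: "'a set set \<Rightarrow> 'a \<Rightarrow> 'a set \<Rightarrow> bool" where
  "star_attachable T z U \<longleftrightarrow> z \<notin> U \<and> (\<forall>a\<in>U. {z, a} \<notin> T \<and> \<not> connected_in T z a)
     \<and> (\<forall>a\<in>U. \<forall>b\<in>U. a \<noteq> b \<longrightarrow> \<not> connected_in T a b)"

definition reaches_star :: "'a set set \<Rightarrow> 'a \<Rightarrow> 'a set \<Rightarrow> 'a \<Rightarrow> bool" where
  "reaches_star T z U u \<longleftrightarrow> connected_in T u z \<or> (\<exists>a\<in>U. connected_in T u a)"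

lemma star_attachable_insertD: "star_attachable T z (insert c U) \<Longrightarrow> star_attachable T z U"
  unfolding star_attachable_def by blast

lemma acyclic_connected_in_Un_star_edges:
  assumes "finite U" "acyclic_edges T" "star_attachable T z U"
  shows "acyclic_edges (T \<union> star_edges z U) \<and> (\<forall>u v. connected_in (T \<union> star_edges z U) u v
     \<longleftrightarrow> connected_in T u v \<or> (reaches_star T z U u \<and> reaches_star T z U v))"
  using assms
proof (induction U rule: finite_induct)
  case empty
  then show ?case by (simp add: reaches_star_def) (metis connected_in_sym connected_in_trans)
next
  case (insert c U)
  define T1 where "T1 = T \<union> star_edges z U"
  from insert.IH[OF insert.prems(1) star_attachable_insertD[OF insert.prems(2)]]
  have ac1: "acyclic_edges T1" and
    ch1: "\<And>u v. connected_in T1 u v \<longleftrightarrow> connected_in T u v \<or> (reaches_star T z U u \<and> reaches_star T z U v)"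
    unfolding T1_def by blast+
  have c: "z \<noteq> c" "{z, c} \<notin> T" "\<not> connected_in T z c" "\<And>a. a \<in> U \<Longrightarrow> \<not> connected_in T c a"
    using insert.prems(2) insert.hyps(2) unfolding star_attachable_def by auto
  have zz: "reaches_star T z U z" by (simp add: reaches_star_def)
  have cc: "\<not> reaches_star T z U c" using c(3,4) unfolding reaches_star_def by (metis connected_in_sym)
  have nc1: "\<not> connected_in T1 z c" unfolding ch1 using c cc by blast
  have "{z, c} \<notin> T1" using c insert.hyps(2) unfolding T1_def by simp
  then have "acyclic_edges (insert {z, c} T1)" using acyclic_edges_insert[OF c(1)] ac1 nc1 by blast
  moreover have "connected_in (insert {z, c} T1) u v \<longleftrightarrow>
      connected_in T u v \<or> (reaches_star T z (insert c U) u \<and> reaches_star T z (insert c U) v)" for u v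
  proof -
    have "connected_in T1 u z \<longleftrightarrow> reaches_star T z U u" "connected_in T1 z v \<longleftrightarrow> reaches_star T z U v"
        "connected_in T1 c v \<longleftrightarrow> connected_in T v c" "connected_in T1 u c \<longleftrightarrow> connected_in T u c"
      unfolding ch1 using zz cc unfolding reaches_star_def by (auto dest: connected_in_sym)
    moreover have "reaches_star T z (insert c U) w \<longleftrightarrow> reaches_star T z U w \<or> connected_in T w c" for w
      unfolding reaches_star_def by blast
    moreover have "connected_in T u c \<Longrightarrow> connected_in T v c \<Longrightarrow> connected_in T u v"
      by (metis connected_in_sym connected_in_trans)
    ultimately show ?thesis unfolding connected_in_insert ch1 by blast
  qed
  moreover have "T \<union> star_edges z (insert c U) = insert {z, c} T1"
    unfolding T1_def star_edges_insert by blast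
  ultimately show ?case by simp
qed

lemma gamma_Un_star_edges:
  assumes "finite U" "finite V" "z \<in> V" "U \<subseteq> V" "acyclic_edges T" "star_attachable T z U"
  shows "gamma V (T \<union> star_edges z U) * (\<Prod>a\<in>U. card (component_of V T a)) * card (component_of V T z)
      = gamma V T * (card (component_of V T z) + (\<Sum>a\<in>U. card (component_of V T a)))
    \<and> card (component_of V (T \<union> star_edges z U) z)
      = card (component_of V T z) + (\<Sum>a\<in>U. card (component_of V T a))"
  using assms
proof (induction U rule: finite_induct)
  case empty
  then show ?case by simp
next
  case (insert c U)
  define T1 where "T1 = T \<union> star_edges z U"
  define P where "P = (\<Prod>a\<in>U. card (component_of V T a))"
  define S where "S = (\<Sum>a\<in>U. card (component_of V T a))"
  define wz where "wz = card (component_of V T z)"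
  define wc where "wc = card (component_of V T c)"
  have attU: "star_attachable T z U" using insert.prems(5) by (rule star_attachable_insertD)
  from insert.IH[OF insert.prems(1,2) _ insert.prems(4) attU] insert.prems(3)
  have IH1: "gamma V T1 * P * wz = gamma V T * (wz + S)" and IH2: "card (component_of V T1 z) = wz + S"
    unfolding T1_def P_def wz_def S_def by auto
  have ch1: "\<And>u v. connected_in T1 u v \<longleftrightarrow> connected_in T u v \<or> (reaches_star T z U u \<and> reaches_star T z U v)"
    using acyclic_connected_in_Un_star_edges[OF insert.hyps(1) insert.prems(4) attU] unfolding T1_def by blast
  have "\<not> connected_in T z c" "\<And>a. a \<in> U \<Longrightarrow> \<not> connected_in T c a"
    using insert.prems(5) insert.hyps(2) unfolding star_attachable_def by auto
  then have cc: "\<not> reaches_star T z U c" unfolding reaches_star_def by (metis connected_in_sym)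
  then have nc1: "\<not> connected_in T1 z c" unfolding ch1 using \<open>\<not> connected_in T z c\<close> by blast
  have comp_c: "component_of V T1 c = component_of V T c"
    unfolding component_of_def ch1 using cc by blast
  have cV: "c \<in> V" using insert.prems(3) by simp
  have join: "gamma V (insert {z, c} T1) * (wz + S) * wc = gamma V T1 * (wz + S + wc)"
    using gamma_insert[OF insert.prems(1,2) cV nc1] IH2 comp_c unfolding wc_def by simp
  have "(gamma V (insert {z, c} T1) * (wc * P) * wz) * (wz + S)
      = (gamma V (insert {z, c} T1) * (wz + S) * wc) * P * wz" by (simp add: algebra_simps)
  also have "\<dots> = (gamma V T1 * P * wz) * (wz + S + wc)" unfolding join by (simp add: algebra_simps)
  also have "\<dots> = (gamma V T * (wz + S + wc)) * (wz + S)" unfolding IH1 by (simp add: algebra_simps)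
  finally have "(gamma V (insert {z, c} T1) * (wc * P) * wz) * (wz + S) = (gamma V T * (wz + S + wc)) * (wz + S)" .
  moreover have "wz + S > 0"
    using card_component_of_pos[OF insert.prems(1,2)] unfolding wz_def by simp
  ultimately have "gamma V (insert {z, c} T1) * (wc * P) * wz = gamma V T * (wz + S + wc)"
    by (metis mult_right_cancel not_gr0)
  moreover have "card (component_of V (insert {z, c} T1) z) = wz + S + wc"
    using card_component_of_insert[OF insert.prems(1) nc1] IH2 comp_c unfolding wc_def by simp
  moreover have "T \<union> star_edges z (insert c U) = insert {z, c} T1"
    unfolding T1_def star_edges_insert by blast
  ultimately show ?case
    using insert.hyps unfolding P_def S_def wc_def wz_def by (simp add: algebra_simps)
qed

definition forest_weight :: "'a set \<Rightarrow> 'a set set \<Rightarrow> nat" where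
  "forest_weight V F = (if acyclic_edges F then gamma V F else 0)"

lemma lap_coeff_eq_sum_forest_weight:
  assumes "finite E"
  shows "lap_coeff V E s = (\<Sum>F\<in>{F. F \<subseteq> E \<and> card F = s}. forest_weight V F)"
proof -
  have "finite {F. F \<subseteq> E \<and> card F = s}" using assms by simp
  moreover have "spanning_forests E s = {F \<in> {F. F \<subseteq> E \<and> card F = s}. acyclic_edges F}"
    unfolding spanning_forests_def by auto
  ultimately show ?thesis
    unfolding lap_coeff_def forest_weight_def by (simp only: sum.inter_filter)
qed

lemma forest_weight_cong:
  assumes "acyclic_edges F1 \<longleftrightarrow> acyclic_edges F2" "\<And>u v. connected_in F1 u v \<longleftrightarrow> connected_in F2 u v"
  shows "forest_weight V F1 = forest_weight V F2"
proof -
  have "connected_in F1 = connected_in F2" using assms(2) by (intro ext) blast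
  then show ?thesis using assms(1) unfolding forest_weight_def gamma_def components_def by simp
qed

lemma forest_weight_insert_swap:
  assumes "connected_in F p q" "p \<noteq> c" "q \<noteq> c" "{p, c} \<notin> F" "{q, c} \<notin> F"
  shows "forest_weight V (insert {p, c} F) = forest_weight V (insert {q, c} F)"
proof (rule forest_weight_cong)
  have p_q: "connected_in F u p \<longleftrightarrow> connected_in F u q" "connected_in F p v \<longleftrightarrow> connected_in F q v" for u v
    using assms(1) by (metis connected_in_sym connected_in_trans)+
  show "acyclic_edges (insert {p, c} F) \<longleftrightarrow> acyclic_edges (insert {q, c} F)"
    unfolding acyclic_edges_insert[OF assms(2,4)] acyclic_edges_insert[OF assms(3,5)] p_q ..
  show "connected_in (insert {p, c} F) u v \<longleftrightarrow> connected_in (insert {q, c} F) u v" for u v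
    unfolding connected_in_insert p_q ..
qed

lemma forest_weight_move_star:
  assumes "finite R" "connected_in F0 p q" "p \<noteq> q"
  shows "S \<inter> R = {} \<Longrightarrow> p \<notin> S \<union> R \<Longrightarrow> q \<notin> S \<union> R \<Longrightarrow> \<forall>a\<in>S \<union> R. {p, a} \<notin> F0 \<and> {q, a} \<notin> F0 \<Longrightarrow>
    forest_weight V (F0 \<union> star_edges p S \<union> star_edges q R) = forest_weight V (F0 \<union> star_edges p (S \<union> R))"
  using assms(1)
proof (induction R arbitrary: S rule: finite_induct)
  case empty
  then show ?case by simp
next
  case (insert c R)
  define F1 where "F1 = F0 \<union> star_edges p S \<union> star_edges q R"
  have "connected_in F1 p q" using assms(2) by (rule connected_in_mono[rotated]) (auto simp: F1_def)
  moreover have "p \<noteq> c" "q \<noteq> c" using insert.prems(2,3) by auto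
  moreover have "{p, c} \<notin> F1" "{q, c} \<notin> F1"
    using insert.prems insert.hyps(2) assms(3) unfolding F1_def by (auto simp: mem_star_edges doubleton_eq_iff)
  ultimately have "forest_weight V (insert {q, c} F1) = forest_weight V (insert {p, c} F1)"
    by (metis forest_weight_insert_swap)
  moreover have "F0 \<union> star_edges p S \<union> star_edges q (insert c R) = insert {q, c} F1"
    "F0 \<union> star_edges p (insert c S) \<union> star_edges q R = insert {p, c} F1"
    unfolding F1_def star_edges_insert by blast+
  moreover have "forest_weight V (F0 \<union> star_edges p (insert c S) \<union> star_edges q R)
      = forest_weight V (F0 \<union> star_edges p (insert c S \<union> R))"
    using insert.prems insert.hyps(2) by (intro insert.IH) auto
  ultimately show ?case by simp
qed

text \<open>The edge {x, a} together with the path from a to y connects x and y, so the star at y may be moved to x.\<close>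
lemma forest_weight_move_star_linked:
  assumes "finite B" "x \<noteq> y" "A \<inter> B = {}" "x \<notin> A \<union> B" "y \<notin> A \<union> B"
    "\<forall>a\<in>A \<union> B. {x, a} \<notin> T \<and> {y, a} \<notin> T" "a \<in> A" "connected_in T y a"
  shows "forest_weight V (T \<union> star_edges x A \<union> star_edges y B)
       = forest_weight V (T \<union> star_edges x (A \<union> B) \<union> star_edges y {})"
proof -
  define F0 where "F0 = insert {x, a} T"
  have "connected_in F0 x a" unfolding F0_def by (rule connected_in_edge) simp
  moreover have "connected_in F0 a y"
    using assms(8) unfolding F0_def by (metis connected_in_sym connected_in_mono subset_insertI)
  ultimately have "connected_in F0 x y" by (rule connected_in_trans)
  moreover have "\<forall>b\<in>(A - {a}) \<union> B. {x, b} \<notin> F0 \<and> {y, b} \<notin> F0"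
    using assms(2-7) unfolding F0_def by (auto simp: doubleton_eq_iff)
  ultimately have "forest_weight V (F0 \<union> star_edges x (A - {a}) \<union> star_edges y B)
      = forest_weight V (F0 \<union> star_edges x ((A - {a}) \<union> B))"
    using forest_weight_move_star[OF assms(1) _ assms(2), of F0 "A - {a}"] assms(3-5) by blast
  moreover have "star_edges x A = insert {x, a} (star_edges x (A - {a}))"
      "star_edges x (A \<union> B) = insert {x, a} (star_edges x ((A - {a}) \<union> B))"
    using assms(7) star_edges_insert[of x a] by (metis insert_Diff, metis Un_insert_left insert_Diff)
  ultimately show ?thesis unfolding F0_def by simp
qed

lemma not_acyclic_star_connected_center:
  assumes "a \<in> U" "connected_in T z a" "{z, a} \<notin> T" "T \<union> star_edges z U \<subseteq> F"
  shows "\<not> acyclic_edges F"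
  by (rule not_acyclic_edges_if_connected[of z a F T]) (use assms in auto)

lemma not_acyclic_star_connected_leaves:
  assumes "a \<noteq> b" "a \<in> U" "b \<in> U" "connected_in T a b" "z \<notin> U" "{z, a} \<notin> T" "{z, b} \<notin> T"
    "T \<union> star_edges z U \<subseteq> F"
  shows "\<not> acyclic_edges F"
proof (rule not_acyclic_edges_if_connected)
  show "{z, b} \<in> F" using assms(3,8) by auto
  show "insert {z, a} T \<subseteq> F - {{z, b}}" using assms by (auto simp: doubleton_eq_iff)
  have "connected_in (insert {z, a} T) a b" using assms(4) by (rule connected_in_mono[rotated]) auto
  then show "connected_in (insert {z, a} T) z b"
    by (rule connected_in_trans[rotated]) (simp add: connected_in_edge)
qed

lemma two_stars_acyclic_gamma:
  assumes fin: "finite V" and xV: "x \<in> V" and yV: "y \<in> V" and xy: "x \<noteq> y"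
    and SV: "S \<subseteq> V" and RV: "R \<subseteq> V" and SR: "S \<inter> R = {}"
    and xn: "x \<notin> S \<union> R" and yn: "y \<notin> S \<union> R"
    and ne: "\<forall>a\<in>S \<union> R. {x, a} \<notin> T \<and> {y, a} \<notin> T"
    and ac: "acyclic_edges T" and nxy: "\<not> connected_in T x y"
    and nxa: "\<forall>a\<in>S \<union> R. \<not> connected_in T x a \<and> \<not> connected_in T y a"
    and nab: "\<forall>a\<in>S \<union> R. \<forall>b\<in>S \<union> R. a \<noteq> b \<longrightarrow> \<not> connected_in T a b"
  shows "acyclic_edges (T \<union> star_edges x S \<union> star_edges y R) \<and>
    gamma V (T \<union> star_edges x S \<union> star_edges y R) * ((\<Prod>a\<in>S. card (component_of V T a))
      * (\<Prod>a\<in>R. card (component_of V T a)) * card (component_of V T x) * card (component_of V T y))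
    = gamma V T * (card (component_of V T x) + (\<Sum>a\<in>S. card (component_of V T a)))
      * (card (component_of V T y) + (\<Sum>a\<in>R. card (component_of V T a)))"
proof -
  define w where "w = (\<lambda>v. card (component_of V T v))"
  define T1 where "T1 = T \<union> star_edges x S"
  have finS: "finite S" "finite R" using SV RV fin by (auto intro: finite_subset)
  have attS: "star_attachable T x S" unfolding star_attachable_def using xn ne nxa nab by auto
  from acyclic_connected_in_Un_star_edges[OF finS(1) ac attS] have ac1: "acyclic_edges T1"
    and ch1: "\<And>u v. connected_in T1 u v \<longleftrightarrow> connected_in T u v \<or> (reaches_star T x S u \<and> reaches_star T x S v)"
    unfolding T1_def by blast+
  have g1: "gamma V T1 * (\<Prod>a\<in>S. w a) * w x = gamma V T * (w x + (\<Sum>a\<in>S. w a))"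
    using gamma_Un_star_edges[OF finS(1) fin xV SV ac attS] unfolding T1_def w_def by blast
  have nR: "\<not> reaches_star T x S v" if "v = y \<or> v \<in> R" for v
    using that nxy nxa nab SR yn unfolding reaches_star_def by (metis UnI1 UnI2 connected_in_sym disjoint_iff)
  have comp_T1: "component_of V T1 v = component_of V T v" if "v = y \<or> v \<in> R" for v
    unfolding component_of_def ch1 using nR[OF that] by blast
  have attR: "star_attachable T1 y R"
    unfolding star_attachable_def ch1 using yn ne xy nR nxa nab
    by (auto simp: T1_def mem_star_edges doubleton_eq_iff)
  from acyclic_connected_in_Un_star_edges[OF finS(2) ac1 attR]
  have ac2: "acyclic_edges (T1 \<union> star_edges y R)" by blast
  have "(\<Prod>a\<in>R. card (component_of V T1 a)) = (\<Prod>a\<in>R. w a)"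
      "(\<Sum>a\<in>R. card (component_of V T1 a)) = (\<Sum>a\<in>R. w a)"
    using comp_T1 unfolding w_def by auto
  then have g2: "gamma V (T1 \<union> star_edges y R) * (\<Prod>a\<in>R. w a) * w y = gamma V T1 * (w y + (\<Sum>a\<in>R. w a))"
    using gamma_Un_star_edges[OF finS(2) fin yV RV ac1 attR] comp_T1[of y] unfolding w_def by simp
  have "gamma V (T1 \<union> star_edges y R) * ((\<Prod>a\<in>S. w a) * (\<Prod>a\<in>R. w a) * w x * w y)
      = (gamma V (T1 \<union> star_edges y R) * (\<Prod>a\<in>R. w a) * w y) * (\<Prod>a\<in>S. w a) * w x"
    by (simp add: algebra_simps)
  also have "\<dots> = (gamma V T1 * (\<Prod>a\<in>S. w a) * w x) * (w y + (\<Sum>a\<in>R. w a))"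
    unfolding g2 by (simp add: algebra_simps)
  also have "\<dots> = gamma V T * (w x + (\<Sum>a\<in>S. w a)) * (w y + (\<Sum>a\<in>R. w a))"
    unfolding g1 ..
  finally show ?thesis using ac2 unfolding T1_def w_def by simp
qed

locale star_exchange =
  fixes V :: "'a set" and T :: "'a set set" and x y :: 'a and U1 U2 :: "'a set"
  assumes finite_V: "finite V" and x_in_V: "x \<in> V" and y_in_V: "y \<in> V" and x_neq_y: "x \<noteq> y"
    and U1_subset: "U1 \<subseteq> V" and U2_subset: "U2 \<subseteq> V" and U1_U2_disjoint: "U1 \<inter> U2 = {}"
    and x_notin: "x \<notin> U1 \<union> U2" and y_notin: "y \<notin> U1 \<union> U2"
    and no_edges: "\<forall>a\<in>U1 \<union> U2. {x, a} \<notin> T \<and> {y, a} \<notin> T"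
begin

lemma swap_centers: "star_exchange V T y x U1 U2"
  using finite_V x_in_V y_in_V x_neq_y U1_subset U2_subset U1_U2_disjoint x_notin y_notin no_edges
  by unfold_locales auto

lemma exchange_if_centers_connected:
  assumes "connected_in T x y"
  shows "forest_weight V (T \<union> star_edges x {} \<union> star_edges y (U1 \<union> U2))
      + forest_weight V (T \<union> star_edges x (U1 \<union> U2) \<union> star_edges y {})
    = forest_weight V (T \<union> star_edges x U1 \<union> star_edges y U2)
      + forest_weight V (T \<union> star_edges x U2 \<union> star_edges y U1)"
proof -
  have move: "forest_weight V (T \<union> star_edges x A \<union> star_edges y B)
      = forest_weight V (T \<union> star_edges x (U1 \<union> U2) \<union> star_edges y {})"
    if "A \<union> B = U1 \<union> U2" "A \<inter> B = {}" for A B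
  proof -
    have "finite B" using that(1) U1_subset U2_subset finite_V by (metis finite_Un finite_subset)
    then show ?thesis
      using forest_weight_move_star[OF _ assms x_neq_y, of B A V] that x_notin y_notin no_edges by auto
  qed
  show ?thesis
    using move[of "{}" "U1 \<union> U2"] move[of U1 U2] move[of U2 U1] U1_U2_disjoint
    by (simp add: Un_commute Int_commute)
qed

lemma exchange_if_leaf_linked_to_y:
  assumes "a \<in> U1 \<union> U2" "connected_in T y a"
  shows "forest_weight V (T \<union> star_edges x {} \<union> star_edges y (U1 \<union> U2))
      + forest_weight V (T \<union> star_edges x (U1 \<union> U2) \<union> star_edges y {})
    \<le> forest_weight V (T \<union> star_edges x U1 \<union> star_edges y U2)
      + forest_weight V (T \<union> star_edges x U2 \<union> star_edges y U1)"
proof -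
  have finite: "finite U1" "finite U2"
    using U1_subset U2_subset finite_V by (auto intro: finite_subset)
  have "forest_weight V (T \<union> star_edges x {} \<union> star_edges y (U1 \<union> U2)) = 0"
    unfolding forest_weight_def using not_acyclic_star_connected_center[OF assms(1,2)] no_edges assms(1)
    by auto
  moreover have "forest_weight V (T \<union> star_edges x (U1 \<union> U2) \<union> star_edges y {})
      \<in> {forest_weight V (T \<union> star_edges x U1 \<union> star_edges y U2),
         forest_weight V (T \<union> star_edges x U2 \<union> star_edges y U1)}"
  proof (cases "a \<in> U1")
    case True
    then show ?thesis
      using forest_weight_move_star_linked[OF finite(2) x_neq_y U1_U2_disjoint x_notin y_notin no_edges
          True assms(2)] by simp
  next
    case False
    then have "a \<in> U2" using assms(1) by blast
    then show ?thesis
      using forest_weight_move_star_linked[of U1 x y U2 T a V] finite(1) x_neq_y U1_U2_disjoint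
        x_notin y_notin no_edges assms(2) by (auto simp: Un_commute Int_commute)
  qed
  ultimately show ?thesis by auto
qed

lemma exchange_if_leaves_connected:
  assumes "a \<in> U1 \<union> U2" "b \<in> U1 \<union> U2" "a \<noteq> b" "connected_in T a b"
  shows "forest_weight V (T \<union> star_edges x {} \<union> star_edges y (U1 \<union> U2))
      + forest_weight V (T \<union> star_edges x (U1 \<union> U2) \<union> star_edges y {}) = 0"
  using not_acyclic_star_connected_leaves[OF assms(3,1,2,4)] no_edges assms x_notin y_notin
  unfolding forest_weight_def by auto

text \<open>The generic case: with w(v) the size of the tree of T containing v and s1, s2 the total
  sizes of the trees at U1, U2, the four weights are gamma(T) / (prod w) times
  w(x) (w(y) + s1 + s2), (w(x) + s1 + s2) w(y), (w(x) + s1) (w(y) + s2) and (w(x) + s2) (w(y) + s1);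
  the last two exceed the first two by 2 s1 s2.\<close>
lemma exchange_if_separated:
  assumes acyclic: "acyclic_edges T" and "\<not> connected_in T x y"
    and "\<forall>a\<in>U1 \<union> U2. \<not> connected_in T x a \<and> \<not> connected_in T y a"
    and "\<forall>a\<in>U1 \<union> U2. \<forall>b\<in>U1 \<union> U2. a \<noteq> b \<longrightarrow> \<not> connected_in T a b"
  shows "forest_weight V (T \<union> star_edges x {} \<union> star_edges y (U1 \<union> U2))
      + forest_weight V (T \<union> star_edges x (U1 \<union> U2) \<union> star_edges y {})
    \<le> forest_weight V (T \<union> star_edges x U1 \<union> star_edges y U2)
      + forest_weight V (T \<union> star_edges x U2 \<union> star_edges y U1)"
proof -
  define w where "w = (\<lambda>v. card (component_of V T v))"
  define P1 where "P1 = (\<Prod>a\<in>U1. w a)"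
  define P2 where "P2 = (\<Prod>a\<in>U2. w a)"
  define s1 where "s1 = (\<Sum>a\<in>U1. w a)"
  define s2 where "s2 = (\<Sum>a\<in>U2. w a)"
  define G where "G = gamma V T"
  define M where "M = P1 * P2 * w x * w y"
  have finite: "finite U1" "finite U2"
    using U1_subset U2_subset finite_V by (auto intro: finite_subset)
  have weight: "forest_weight V (T \<union> star_edges x A \<union> star_edges y B)
      * ((\<Prod>a\<in>A. w a) * (\<Prod>a\<in>B. w a) * w x * w y) = G * (w x + (\<Sum>a\<in>A. w a)) * (w y + (\<Sum>a\<in>B. w a))"
    if "A \<union> B = U1 \<union> U2" "A \<inter> B = {}" for A B
  proof -
    have "A \<subseteq> V" "B \<subseteq> V" using that(1) U1_subset U2_subset by blast+
    note two_stars = two_stars_acyclic_gamma[OF finite_V x_in_V y_in_V x_neq_y this that(2), unfolded that(1)]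
    show ?thesis
      using two_stars[OF x_notin y_notin no_edges acyclic assms(2-4)] unfolding forest_weight_def w_def G_def
      by simp
  qed
  have sums: "(\<Prod>a\<in>U1 \<union> U2. w a) = P1 * P2" "(\<Sum>a\<in>U1 \<union> U2. w a) = s1 + s2"
    unfolding P1_def P2_def s1_def s2_def using finite U1_U2_disjoint
    by (simp_all add: prod.union_disjoint sum.union_disjoint)
  have "M > 0"
    using U1_subset U2_subset x_in_V y_in_V card_component_of_pos[OF finite_V]
    unfolding M_def P1_def P2_def w_def by (simp add: subset_iff prod_pos)
  moreover have "(forest_weight V (T \<union> star_edges x {} \<union> star_edges y (U1 \<union> U2))
      + forest_weight V (T \<union> star_edges x (U1 \<union> U2) \<union> star_edges y {})) * M
    = G * w x * (w y + (s1 + s2)) + G * (w x + (s1 + s2)) * w y"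
    using weight[of "{}" "U1 \<union> U2"] weight[of "U1 \<union> U2" "{}"] sums
    unfolding M_def by (simp add: algebra_simps)
  moreover have "(forest_weight V (T \<union> star_edges x U1 \<union> star_edges y U2)
      + forest_weight V (T \<union> star_edges x U2 \<union> star_edges y U1)) * M
    = G * (w x + s1) * (w y + s2) + G * (w x + s2) * (w y + s1)"
    using weight[of U1 U2] weight[of U2 U1] U1_U2_disjoint
    unfolding M_def P1_def P2_def s1_def s2_def by (simp add: Un_commute Int_commute algebra_simps)
  moreover have "G * (w x + s1) * (w y + s2) + G * (w x + s2) * (w y + s1)
      = G * w x * (w y + (s1 + s2)) + G * (w x + (s1 + s2)) * w y + 2 * G * s1 * s2"
    by (simp add: algebra_simps)
  ultimately show ?thesis by (metis le_add1 mult_le_cancel2 not_gr0)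
qed

lemma exchange:
  "forest_weight V (T \<union> star_edges x {} \<union> star_edges y (U1 \<union> U2))
      + forest_weight V (T \<union> star_edges x (U1 \<union> U2) \<union> star_edges y {})
    \<le> forest_weight V (T \<union> star_edges x U1 \<union> star_edges y U2)
      + forest_weight V (T \<union> star_edges x U2 \<union> star_edges y U1)"
proof (cases "acyclic_edges T")
  case False
  then have "forest_weight V (T \<union> A \<union> B) = 0" for A B
    using acyclic_edges_subset[of T "T \<union> A \<union> B"] unfolding forest_weight_def by auto
  then show ?thesis by (simp only:)
next
  case acyclic: True
  consider "connected_in T x y"
    | a where "a \<in> U1 \<union> U2" "connected_in T y a"
    | a where "a \<in> U1 \<union> U2" "connected_in T x a"
    | a b where "a \<in> U1 \<union> U2" "b \<in> U1 \<union> U2" "a \<noteq> b" "connected_in T a b"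
    | "\<not> connected_in T x y" "\<forall>a\<in>U1 \<union> U2. \<not> connected_in T x a \<and> \<not> connected_in T y a"
      "\<forall>a\<in>U1 \<union> U2. \<forall>b\<in>U1 \<union> U2. a \<noteq> b \<longrightarrow> \<not> connected_in T a b"
    by blast
  then show ?thesis
  proof cases
    case 1
    then show ?thesis using exchange_if_centers_connected by simp
  next
    case 2
    then show ?thesis by (rule exchange_if_leaf_linked_to_y)
  next
    case 3
    then show ?thesis
      using star_exchange.exchange_if_leaf_linked_to_y[OF swap_centers] by (simp add: Un_ac add.commute)
  next
    case 4
    then show ?thesis using exchange_if_leaves_connected by simp
  next
    case 5
    then show ?thesis using exchange_if_separated[OF acyclic] by blast
  qed
qed

end

definition edge_image :: "('a \<Rightarrow> 'b) \<Rightarrow> 'a set set \<Rightarrow> 'b set set" where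
  "edge_image f F = (\<lambda>e. f ` e) ` F"

lemma edge_image_mono: "A \<subseteq> B \<Longrightarrow> edge_image f A \<subseteq> edge_image f B"
  by (auto simp: edge_image_def)

lemma edge_image_Un: "edge_image f (A \<union> B) = edge_image f A \<union> edge_image f B"
  by (simp add: edge_image_def image_Un)

lemma star_edges_eq_image: "star_edges z S = (\<lambda>v. {z, v}) ` S"
  by (auto simp: star_edges_def)

lemma edge_image_star_edges:
  assumes "\<And>a. a \<in> S \<Longrightarrow> f a = a"
  shows "edge_image f (star_edges z S) = star_edges (f z) S"
  using assms unfolding edge_image_def star_edges_eq_image image_image by (intro image_cong) auto

lemma edge_image_inv:
  assumes "bij f"
  shows "edge_image (inv f) (edge_image f F) = F"
  using assms unfolding edge_image_def by (simp add: image_image image_comp bij_is_inj)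

lemma inj_edge_image: "inj f \<Longrightarrow> inj (edge_image f)"
proof -
  have inj_image: "inj g \<Longrightarrow> inj (\<lambda>A. g ` A)" for g :: "'c \<Rightarrow> 'd"
    by (simp add: inj_def inj_image_eq_iff)
  show "inj f \<Longrightarrow> inj (edge_image f)" unfolding edge_image_def[abs_def] by (intro inj_image)
qed

lemma card_edge_image: "inj f \<Longrightarrow> card (edge_image f F) = card F"
  unfolding edge_image_def by (rule card_image) (simp add: inj_on_def inj_image_eq_iff)

lemma connected_in_edge_image:
  assumes "connected_in F u v"
  shows "connected_in (edge_image f F) (f u) (f v)"
proof -
  have "(u, v) \<in> (adj_rel F)\<^sup>*" using assms unfolding connected_in_def .
  then have "(f u, f v) \<in> (adj_rel (edge_image f F))\<^sup>*"
  proof (induction rule: rtrancl_induct)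
    case (step p q)
    then have "(f p, f q) \<in> adj_rel (edge_image f F)"
      unfolding adj_rel_def edge_image_def by (auto intro: image_eqI[where x = "{p, q}"])
    with step.IH show ?case by (rule rtrancl_into_rtrancl)
  qed simp
  then show ?thesis unfolding connected_in_def .
qed

lemma connected_in_edge_image_iff:
  assumes "bij f"
  shows "connected_in (edge_image f F) (f u) (f v) \<longleftrightarrow> connected_in F u v"
proof
  assume "connected_in (edge_image f F) (f u) (f v)"
  then have "connected_in (edge_image (inv f) (edge_image f F)) (inv f (f u)) (inv f (f v))"
    by (rule connected_in_edge_image)
  then show "connected_in F u v" by (simp add: edge_image_inv[OF assms] bij_is_inj[OF assms])
qed (rule connected_in_edge_image)

lemma doubleton_mem_edge_image_iff:
  assumes "inj f"
  shows "{f u, f v} \<in> edge_image f F \<longleftrightarrow> {u, v} \<in> F"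
proof -
  have "inj (\<lambda>A. f ` A)" using assms by (simp add: inj_def inj_image_eq_iff)
  moreover have "{f u, f v} = f ` {u, v}" by simp
  ultimately show ?thesis unfolding edge_image_def by (simp only: inj_image_mem_iff)
qed

lemma edge_image_Diff_doubleton:
  assumes "inj f"
  shows "edge_image f (F - {{u, v}}) = edge_image f F - {{f u, f v}}"
proof -
  have "inj (\<lambda>A. f ` A)" using assms by (simp add: inj_def inj_image_eq_iff)
  then show ?thesis unfolding edge_image_def by (simp add: image_set_diff)
qed

lemma acyclic_edges_edge_image:
  assumes "bij f"
  shows "acyclic_edges (edge_image f F) \<longleftrightarrow> acyclic_edges F"
proof -
  have "acyclic_edges (edge_image f F) \<longleftrightarrow> (\<forall>u v. {f u, f v} \<in> edge_image f F
      \<longrightarrow> \<not> connected_in (edge_image f F - {{f u, f v}}) (f u) (f v))"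
  proof -
    have "f (inv f p) = p" for p by (simp add: surj_f_inv_f bij_is_surj[OF assms])
    then have "(\<forall>p q. Q p q) \<longleftrightarrow> (\<forall>u v. Q (f u) (f v))" for Q by metis
    then show ?thesis unfolding acyclic_edges_def .
  qed
  then show ?thesis
    unfolding acyclic_edges_def edge_image_Diff_doubleton[OF bij_is_inj[OF assms], symmetric]
      doubleton_mem_edge_image_iff[OF bij_is_inj[OF assms]] connected_in_edge_image_iff[OF assms] .
qed

lemma component_of_edge_image:
  assumes "bij f" "f ` V = V"
  shows "component_of V (edge_image f F) (f v) = f ` component_of V F v"
proof -
  have "component_of V (edge_image f F) (f v) = {w \<in> f ` V. connected_in (edge_image f F) (f v) w}"
    unfolding component_of_def assms(2) ..
  also have "\<dots> = f ` {w \<in> V. connected_in (edge_image f F) (f v) (f w)}" by blast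
  also have "\<dots> = f ` component_of V F v"
    unfolding component_of_def connected_in_edge_image_iff[OF assms(1)] ..
  finally show ?thesis .
qed

lemma gamma_edge_image:
  assumes "bij f" "f ` V = V"
  shows "gamma V (edge_image f F) = gamma V F"
proof -
  have "component_of V (edge_image f F) ` V = (\<lambda>C. f ` C) ` component_of V F ` V"
    using component_of_edge_image[OF assms] by (metis (no_types, lifting) assms(2) image_cong image_image)
  moreover have "inj_on (\<lambda>C. f ` C) A" for A
    using bij_is_inj[OF assms(1)] by (simp add: inj_on_def inj_image_eq_iff)
  ultimately show ?thesis
    unfolding gamma_eq_prod_component_of using bij_is_inj[OF assms(1)]
    by (simp add: prod.reindex card_image inj_on_subset)
qed

lemma forest_weight_edge_image:
  assumes "bij f" "f ` V = V"
  shows "forest_weight V (edge_image f F) = forest_weight V F"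
  unfolding forest_weight_def acyclic_edges_edge_image[OF assms(1)] gamma_edge_image[OF assms] ..

definition split_pairs :: "'a set set \<Rightarrow> 'a set \<Rightarrow> nat \<Rightarrow> ('a set set \<times> 'a set) set" where
  "split_pairs H W s = {(T, U). T \<subseteq> H \<and> U \<subseteq> W \<and> card T + card U = s}"

lemma finite_split_pairs: "finite H \<Longrightarrow> finite W \<Longrightarrow> finite (split_pairs H W s)"
  by (rule finite_subset[of _ "Pow H \<times> Pow W"]) (auto simp: split_pairs_def)

lemma bij_betw_two_stars_split:
  assumes fin: "finite H" "finite X" "finite Y" and XY: "X \<inter> Y = {}"
    and disj: "H \<inter> star_edges x X = {}" "H \<inter> star_edges y Y = {}" "star_edges x X \<inter> star_edges y Y = {}"
  shows "bij_betw (\<lambda>(T, U). T \<union> star_edges x (U \<inter> X) \<union> star_edges y (U \<inter> Y)) (split_pairs H (X \<union> Y) s)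
    {F. F \<subseteq> H \<union> star_edges x X \<union> star_edges y Y \<and> card F = s}"
proof -
  define join where "join = (\<lambda>(T, U). T \<union> star_edges x (U \<inter> X) \<union> star_edges y (U \<inter> Y))"
  define split where "split = (\<lambda>F. (F \<inter> H, {a \<in> X. {x, a} \<in> F} \<union> {a \<in> Y. {y, a} \<in> F}))"
  have stars: "star_edges x (U \<inter> X) \<subseteq> star_edges x X" "star_edges y (U \<inter> Y) \<subseteq> star_edges y Y" for U
    by (simp_all add: star_edges_mono)
  have hx: "{x, a} \<notin> H" "{x, a} \<notin> star_edges y Y" if "a \<in> X" for a
    using that disj(1,3) doubleton_mem_star_edges[of x a X] by blast+
  have hy: "{y, a} \<notin> H" "{y, a} \<notin> star_edges x X" if "a \<in> Y" for a
    using that disj(2,3) doubleton_mem_star_edges[of y a Y] by blast+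
  have card: "card (join (T, U)) = card T + card U" if "T \<subseteq> H" "U \<subseteq> X \<union> Y" for T U
  proof -
    have "finite T" "finite (U \<inter> X)" "finite (U \<inter> Y)" using that(1) fin by (auto intro: finite_subset)
    moreover have "U = (U \<inter> X) \<union> (U \<inter> Y)" using that(2) by blast
    then have "card U = card (U \<inter> X) + card (U \<inter> Y)"
      using calculation XY by (metis card_Un_disjoint inf_commute inf_left_commute inf_bot_right Int_Un_distrib)
    moreover have "T \<inter> star_edges x (U \<inter> X) = {}" "(T \<union> star_edges x (U \<inter> X)) \<inter> star_edges y (U \<inter> Y) = {}"
      using that(1) stars disj by blast+
    ultimately show ?thesis unfolding join_def by (simp add: card_Un_disjoint card_star_edges)
  qed
  have split_join: "split (join (T, U)) = (T, U)" if "T \<subseteq> H" "U \<subseteq> X \<union> Y" for T U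
  proof -
    have "join (T, U) \<inter> H = T" using that(1) stars disj unfolding join_def by blast
    moreover have "{a \<in> X. {x, a} \<in> join (T, U)} = U \<inter> X" "{a \<in> Y. {y, a} \<in> join (T, U)} = U \<inter> Y"
      using that(1) stars hx hy unfolding join_def by (auto dest: subsetD[OF stars(1)] subsetD[OF stars(2)])
    ultimately show ?thesis using that(2) unfolding split_def by auto
  qed
  have join_split: "join (split F) = F" if F: "F \<subseteq> H \<union> star_edges x X \<union> star_edges y Y" for F
  proof (intro equalityI subsetI)
    fix e assume "e \<in> join (split F)"
    then show "e \<in> F" using XY unfolding join_def split_def by (auto simp: mem_star_edges)
  next
    fix e assume e: "e \<in> F"
    then have "e \<in> H \<or> e \<in> star_edges x X \<or> e \<in> star_edges y Y" using F by blast
    then consider "e \<in> H" | a where "a \<in> X" "e = {x, a}" | a where "a \<in> Y" "e = {y, a}"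
      unfolding mem_star_edges by blast
    then show "e \<in> join (split F)" using e unfolding join_def split_def by cases auto
  qed
  show ?thesis
    unfolding join_def[symmetric]
  proof (rule bij_betw_byWitness[where f' = split])
    show "\<forall>p\<in>split_pairs H (X \<union> Y) s. split (join p) = p"
      using split_join unfolding split_pairs_def by auto
    show "\<forall>F\<in>{F. F \<subseteq> H \<union> star_edges x X \<union> star_edges y Y \<and> card F = s}. join (split F) = F"
      using join_split by blast
    show "join ` split_pairs H (X \<union> Y) s \<subseteq> {F. F \<subseteq> H \<union> star_edges x X \<union> star_edges y Y \<and> card F = s}"
      using card stars unfolding split_pairs_def join_def by fastforce
    show "split ` {F. F \<subseteq> H \<union> star_edges x X \<union> star_edges y Y \<and> card F = s} \<subseteq> split_pairs H (X \<union> Y) s"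
    proof (rule image_subsetI)
      fix F assume "F \<in> {F. F \<subseteq> H \<union> star_edges x X \<union> star_edges y Y \<and> card F = s}"
      then have F: "F \<subseteq> H \<union> star_edges x X \<union> star_edges y Y" "card F = s" by auto
      obtain T U where TU: "split F = (T, U)" by fastforce
      then have "T \<subseteq> H" "U \<subseteq> X \<union> Y" unfolding split_def by auto
      moreover have "card T + card U = s" using card[OF calculation] join_split[OF F(1)] F(2) TU by simp
      ultimately show "split F \<in> split_pairs H (X \<union> Y) s" using TU unfolding split_pairs_def by simp
    qed
  qed
qed

lemma lap_coeff_two_stars:
  assumes "finite H" "finite X" "finite Y" "X \<inter> Y = {}"
    "H \<inter> star_edges x X = {}" "H \<inter> star_edges y Y = {}" "star_edges x X \<inter> star_edges y Y = {}"
  shows "lap_coeff V (H \<union> star_edges x X \<union> star_edges y Y) s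
    = (\<Sum>(T, U)\<in>split_pairs H (X \<union> Y) s. forest_weight V (T \<union> star_edges x (U \<inter> X) \<union> star_edges y (U \<inter> Y)))"
proof -
  have "finite (H \<union> star_edges x X \<union> star_edges y Y)" using assms(1-3) by simp
  then show ?thesis
    using sum.reindex_bij_betw[OF bij_betw_two_stars_split[OF assms], of "forest_weight V"]
    by (simp add: lap_coeff_eq_sum_forest_weight case_prod_beta)
qed

lemma sum_le_sum_by_pairing:
  fixes f g :: "'a \<Rightarrow> 'b::{linordered_cancel_ab_semigroup_add, ordered_comm_monoid_add}"
  assumes "finite P" "\<sigma> ` P \<subseteq> P" "inj_on \<sigma> P" "\<And>p. p \<in> P \<Longrightarrow> f p + f (\<sigma> p) \<le> g p + g (\<sigma> p)"
  shows "sum f P \<le> sum g P"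
proof -
  have reindex: "sum h P = sum (h \<circ> \<sigma>) P" for h :: "'a \<Rightarrow> 'b"
    using sum.reindex[OF assms(3), of h] endo_inj_surj[OF assms(1-3)] by simp
  have "sum f P + sum f P = (\<Sum>p\<in>P. f p + f (\<sigma> p))" using reindex[of f] by (simp add: sum.distrib)
  also have "\<dots> \<le> (\<Sum>p\<in>P. g p + g (\<sigma> p))" using assms(4) by (rule sum_mono)
  also have "\<dots> = sum g P + sum g P" using reindex[of g] by (simp add: sum.distrib)
  finally show ?thesis by (meson add_strict_mono not_le)
qed

lemma forest_weight_relabel_exchange:
  assumes "finite V" and XV: "X \<subseteq> V" "Y \<subseteq> V" and "X \<inter> Y = {}"
    and "x \<in> V" "y \<in> V" "x \<noteq> y" "x \<notin> X \<union> Y" "y \<notin> X \<union> Y"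
    and "\<forall>a\<in>X \<union> Y. {x, a} \<notin> T \<and> {y, a} \<notin> T" and U: "U \<subseteq> X \<union> Y"
    and \<beta>: "bij \<beta>" "\<beta> ` V = V" "\<beta> x = y" "\<beta> y = x" "\<forall>a\<in>X \<union> Y. \<beta> a = a"
  shows "forest_weight V (T \<union> star_edges y (U \<inter> X) \<union> star_edges y (U \<inter> Y))
      + forest_weight V (edge_image \<beta> T \<union> star_edges y (U \<inter> X) \<union> star_edges y (U \<inter> Y))
    \<le> forest_weight V (T \<union> star_edges x (U \<inter> X) \<union> star_edges y (U \<inter> Y))
      + forest_weight V (edge_image \<beta> T \<union> star_edges x (U \<inter> X) \<union> star_edges y (U \<inter> Y))"
proof -
  have relabel: "forest_weight V (edge_image \<beta> T \<union> star_edges (\<beta> u) A \<union> star_edges (\<beta> v) B)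
      = forest_weight V (T \<union> star_edges u A \<union> star_edges v B)" if "A \<subseteq> X \<union> Y" "B \<subseteq> X \<union> Y" for u v A B
  proof -
    have "edge_image \<beta> (T \<union> star_edges u A \<union> star_edges v B)
        = edge_image \<beta> T \<union> star_edges (\<beta> u) A \<union> star_edges (\<beta> v) B"
      using that \<beta>(5) edge_image_star_edges[of A \<beta> u] edge_image_star_edges[of B \<beta> v]
      by (simp add: edge_image_Un subset_iff)
    then show ?thesis using forest_weight_edge_image[OF \<beta>(1,2), of "T \<union> star_edges u A \<union> star_edges v B"]
      by simp
  qed
  have UXY: "U \<inter> X \<subseteq> X \<union> Y" "U \<inter> Y \<subseteq> X \<union> Y" by blast+
  have "star_exchange V T x y (U \<inter> X) (U \<inter> Y)"
    using assms(1,4-10) XV by unfold_locales auto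
  then have "forest_weight V (T \<union> star_edges x {} \<union> star_edges y (U \<inter> X \<union> U \<inter> Y))
      + forest_weight V (T \<union> star_edges x (U \<inter> X \<union> U \<inter> Y) \<union> star_edges y {})
    \<le> forest_weight V (T \<union> star_edges x (U \<inter> X) \<union> star_edges y (U \<inter> Y))
      + forest_weight V (T \<union> star_edges x (U \<inter> Y) \<union> star_edges y (U \<inter> X))"
    by (rule star_exchange.exchange)
  moreover have "forest_weight V (edge_image \<beta> T \<union> star_edges y (U \<inter> X) \<union> star_edges y (U \<inter> Y))
      = forest_weight V (T \<union> star_edges x (U \<inter> X \<union> U \<inter> Y) \<union> star_edges y {})"
    using relabel[OF UXY, of x x] \<beta>(3) by (simp add: star_edges_Un Un_assoc)
  moreover have "forest_weight V (edge_image \<beta> T \<union> star_edges x (U \<inter> X) \<union> star_edges y (U \<inter> Y))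
      = forest_weight V (T \<union> star_edges x (U \<inter> Y) \<union> star_edges y (U \<inter> X))"
    using relabel[OF UXY, of y x] \<beta>(3,4) by (simp add: Un_ac)
  ultimately show ?thesis by (simp add: star_edges_Un Un_assoc)
qed

lemma lap_coeff_move_star_le:
  assumes fin: "finite V" "finite H" and XV: "X \<subseteq> V" "Y \<subseteq> V" and XY: "X \<inter> Y = {}"
    and xV: "x \<in> V" and yV: "y \<in> V" and xy: "x \<noteq> y" and notin: "x \<notin> X \<union> Y" "y \<notin> X \<union> Y"
    and no_edges: "\<forall>a\<in>X \<union> Y. {x, a} \<notin> H \<and> {y, a} \<notin> H"
    and \<beta>: "bij \<beta>" "\<beta> ` V = V" "\<beta> x = y" "\<beta> y = x" "\<forall>a\<in>X \<union> Y. \<beta> a = a" "edge_image \<beta> H \<subseteq> H"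
  shows "lap_coeff V (H \<union> star_edges y X \<union> star_edges y Y) s
    \<le> lap_coeff V (H \<union> star_edges x X \<union> star_edges y Y) s"
proof -
  define P where "P = split_pairs H (X \<union> Y) s"
  define f where "f = (\<lambda>(T, U). forest_weight V (T \<union> star_edges y (U \<inter> X) \<union> star_edges y (U \<inter> Y)))"
  define g where "g = (\<lambda>(T, U). forest_weight V (T \<union> star_edges x (U \<inter> X) \<union> star_edges y (U \<inter> Y)))"
  define \<sigma> :: "'a set set \<times> 'a set \<Rightarrow> 'a set set \<times> 'a set" where "\<sigma> = (\<lambda>(T, U). (edge_image \<beta> T, U))"
  have finite: "finite X" "finite Y" using fin XV by (auto intro: finite_subset)
  have H_stars: "H \<inter> star_edges x X = {}" "H \<inter> star_edges y X = {}" "H \<inter> star_edges y Y = {}"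
    using no_edges by (auto simp: mem_star_edges)
  have stars: "star_edges x X \<inter> star_edges y Y = {}" "star_edges y X \<inter> star_edges y Y = {}"
    using notin xy XY by (auto simp: mem_star_edges doubleton_eq_iff disjoint_iff)
  have f_sum: "lap_coeff V (H \<union> star_edges y X \<union> star_edges y Y) s = sum f P"
    unfolding f_def P_def by (rule lap_coeff_two_stars[OF fin(2) finite XY H_stars(2,3) stars(2)])
  have g_sum: "lap_coeff V (H \<union> star_edges x X \<union> star_edges y Y) s = sum g P"
    unfolding g_def P_def by (rule lap_coeff_two_stars[OF fin(2) finite XY H_stars(1,3) stars(1)])
  have "\<sigma> ` P \<subseteq> P"
  proof (rule image_subsetI)
    fix p assume "p \<in> P"
    then obtain T U where TU: "p = (T, U)" "T \<subseteq> H" "U \<subseteq> X \<union> Y" "card T + card U = s"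
      unfolding P_def split_pairs_def by blast
    moreover have "edge_image \<beta> T \<subseteq> H" using edge_image_mono[OF TU(2)] \<beta>(6) by blast
    ultimately show "\<sigma> p \<in> P"
      unfolding P_def split_pairs_def \<sigma>_def using card_edge_image[OF bij_is_inj[OF \<beta>(1)]] by simp
  qed
  moreover have "inj_on \<sigma> P"
  proof (rule inj_onI)
    fix p q assume "\<sigma> p = \<sigma> q"
    then show "p = q"
      using inj_eq[OF inj_edge_image[OF bij_is_inj[OF \<beta>(1)]]] unfolding \<sigma>_def by (cases p, cases q) auto
  qed
  moreover have "f p + f (\<sigma> p) \<le> g p + g (\<sigma> p)" if "p \<in> P" for p
  proof -
    obtain T U where "p = (T, U)" "T \<subseteq> H" "U \<subseteq> X \<union> Y"
      using \<open>p \<in> P\<close> unfolding P_def split_pairs_def by auto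
    moreover have "\<forall>a\<in>X \<union> Y. {x, a} \<notin> T \<and> {y, a} \<notin> T" using no_edges calculation(2) by blast
    ultimately show ?thesis
      using forest_weight_relabel_exchange[OF fin(1) XV XY xV yV xy notin _ _ \<beta>(1-5)]
      unfolding f_def g_def \<sigma>_def by simp
  qed
  moreover have "finite P" unfolding P_def using fin(2) finite by (simp add: finite_split_pairs)
  ultimately show ?thesis unfolding f_sum g_sum using sum_le_sum_by_pairing[of P \<sigma> f g] by blast
qed

lemma graph_automorphism_extend:
  assumes aut: "graph_automorphism V H \<alpha>" and edges: "\<forall>e\<in>H. \<exists>u v. e = {u, v} \<and> u \<in> V \<and> v \<in> V"
  obtains \<beta> where "bij \<beta>" "\<beta> ` V = V" "\<And>v. v \<in> V \<Longrightarrow> \<beta> v = \<alpha> v" "edge_image \<beta> H \<subseteq> H"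
proof
  define \<beta> where "\<beta> = (\<lambda>v. if v \<in> V then \<alpha> v else id v)"
  have "bij_betw \<alpha> V V" using aut unfolding graph_automorphism_def by blast
  then have "bij_betw \<beta> (V \<union> - V) (V \<union> - V)"
    unfolding \<beta>_def by (rule bij_betw_disjoint_Un[OF _ bij_betw_id]) auto
  then show "bij \<beta>" by simp
  show "\<beta> ` V = V" using \<open>bij_betw \<alpha> V V\<close> unfolding \<beta>_def bij_betw_def by simp
  show "\<beta> v = \<alpha> v" if "v \<in> V" for v using that unfolding \<beta>_def by simp
  show "edge_image \<beta> H \<subseteq> H"
  proof
    fix e assume "e \<in> edge_image \<beta> H"
    then obtain e' where "e' \<in> H" "e = \<beta> ` e'" unfolding edge_image_def by blast
    moreover obtain u v where "e' = {u, v}" "u \<in> V" "v \<in> V" using edges \<open>e' \<in> H\<close> by blast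
    moreover have "{\<alpha> u, \<alpha> v} \<in> H"
      using aut \<open>e' \<in> H\<close> calculation(3-5) unfolding graph_automorphism_def by blast
    ultimately show "e \<in> H" unfolding \<beta>_def by simp
  qed
qed

lemma finite_edges_if_simple_graph: "simple_graph V E \<Longrightarrow> finite E"
  unfolding simple_graph_def by (rule finite_subset[of _ "Pow V"]) auto

lemma Xset_subset:
  assumes "simple_graph V E"
  shows "Xset E K x y \<subseteq> V"
proof
  fix a assume "a \<in> Xset E K x y"
  then have "{a, x} \<in> E" unfolding Xset_def nbhd_def by blast
  then obtain u v where "{a, x} = {u, v}" "u \<in> V" "v \<in> V" using assms unfolding simple_graph_def by blast
  then show "a \<in> V" by (auto simp: doubleton_eq_iff)
qed

lemma Xset_disjoint: "Xset E K x y \<inter> Xset E K y x = {}"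
  unfolding Xset_def by blast

lemma notin_Xset: "v \<in> K \<Longrightarrow> v \<notin> Xset E K x y"
  unfolding Xset_def by blast

lemma star_edges_Xset_subset: "star_edges x (Xset E K x y) \<subseteq> E"
  unfolding Xset_def nbhd_def by (auto simp: mem_star_edges insert_commute)

lemma doubleton_notin_if_mem_Xset: "a \<in> Xset E K x y \<Longrightarrow> {y, a} \<notin> E"
  unfolding Xset_def nbhd_def by (auto simp: insert_commute)

lemma Kxy_op_eq_Un_star_edges:
  assumes "x \<in> K" "x \<noteq> y"
  shows "Kxy_op E K x y = (E - (star_edges x (Xset E K x y) \<union> star_edges y (Xset E K y x)))
    \<union> star_edges y (Xset E K x y) \<union> star_edges y (Xset E K y x)"
proof -
  have "star_edges x (Xset E K x y) \<inter> star_edges y (Xset E K y x) = {}"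
    using assms notin_Xset[of x K E y x] by (auto simp: mem_star_edges doubleton_eq_iff)
  then show ?thesis
    using star_edges_Xset_subset[of y E K x] unfolding Kxy_op_def by blast
qed

theorem mainTheorem2:
  fixes V :: "'a set" and E :: "'a set set" and K :: "'a set" and x y :: 'a
  assumes "simple_graph V E"
    and "K \<subseteq> V" and "x \<in> K" and "y \<in> K" and "x \<noteq> y"
    and "symmetric_Kxy V E K x y"
  shows "\<forall>s < card V. lap_coeff V E s \<ge> lap_coeff V (Kxy_op E K x y) s"
proof (intro allI impI)
  fix s
  define X where "X = Xset E K x y"
  define Y where "Y = Xset E K y x"
  define H where "H = E - (star_edges x X \<union> star_edges y Y)"
  obtain \<alpha> where \<alpha>: "graph_automorphism V H \<alpha>" "\<alpha> x = y" "\<alpha> y = x" "\<forall>v\<in>X \<union> Y. \<alpha> v = v"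
    using assms(6) unfolding symmetric_Kxy_def X_def Y_def H_def by blast
  have edges: "\<forall>e\<in>H. \<exists>u v. e = {u, v} \<and> u \<in> V \<and> v \<in> V"
    using assms(1) unfolding simple_graph_def H_def by blast
  obtain \<beta> where \<beta>: "bij \<beta>" "\<beta> ` V = V" "\<And>v. v \<in> V \<Longrightarrow> \<beta> v = \<alpha> v" "edge_image \<beta> H \<subseteq> H"
    using graph_automorphism_extend[OF \<alpha>(1) edges] by blast
  have fin: "finite V" using assms(1) unfolding simple_graph_def by blast
  have "finite H" unfolding H_def using finite_edges_if_simple_graph[OF assms(1)] by simp
  have XV: "X \<subseteq> V" "Y \<subseteq> V" unfolding X_def Y_def using Xset_subset[OF assms(1)] by blast+
  have xyV: "x \<in> V" "y \<in> V" using assms(2-4) by blast+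
  have XY: "X \<inter> Y = {}" unfolding X_def Y_def by (rule Xset_disjoint)
  have notin: "x \<notin> X \<union> Y" "y \<notin> X \<union> Y" unfolding X_def Y_def using assms(3,4) by (simp_all add: notin_Xset)
  have no_edges: "\<forall>a\<in>X \<union> Y. {x, a} \<notin> H \<and> {y, a} \<notin> H"
    using doubleton_notin_if_mem_Xset[of _ E K x y] doubleton_notin_if_mem_Xset[of _ E K y x]
    unfolding H_def X_def[symmetric] Y_def[symmetric] by auto
  have \<beta>_xy: "\<beta> x = y" "\<beta> y = x" "\<forall>a\<in>X \<union> Y. \<beta> a = a"
    using \<alpha>(2-4) \<beta>(3) xyV XV by auto
  have "E = H \<union> star_edges x X \<union> star_edges y Y"
    using star_edges_Xset_subset[of x E K y] star_edges_Xset_subset[of y E K x]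
    unfolding H_def X_def Y_def by blast
  moreover have "Kxy_op E K x y = H \<union> star_edges y X \<union> star_edges y Y"
    unfolding H_def X_def Y_def by (rule Kxy_op_eq_Un_star_edges[OF assms(3,5)])
  moreover note lap_coeff_move_star_le[OF fin \<open>finite H\<close> XV XY xyV assms(5) notin no_edges \<beta>(1,2) \<beta>_xy \<beta>(4)]
  ultimately show "lap_coeff V (Kxy_op E K x y) s \<le> lap_coeff V E s" by simp
qed

end
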